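(* Let $\mathcal{R}$ be a commutative, associative real algebra with unit, $l\ge1$, and $m_1,\ldots,m_l$ positive integers. Let $A_1,\ldots,A_l\in M^{\infty\times\infty}_0(\mathcal{R}[e^{t_1},\ldots,e^{t_{l+1}}])$ satisfy: a) $A_iA_j=A_jA_i$ for all $i,j$; b) $\partial_iA_j=\partial_jA_i$ for $1\le i,j\le l$ (with $\partial_i$ applied entrywise); c) for each $i$, $A_i=A_i'+A_i''$, where $A_i'$ is strictly lower triangular and each of its entries is a linear combination of monomials $e^{td}$, $d=(d_1,\ldots,d_{l+1})\ge0$, with $d_i-m_id_{l+1}\ne0$, and $A_i''$ is strictly upper triangular with entries in $\mathcal{R}$ (independent of $t$). Consider the system $( * )$: $\partial_ig=A_ig$, $1\le i\le l$, for $g=\sum_{d\ge0}g_d(t_1,\ldots,t_l)e^{td}\in\mathcal{R}^\infty_0[t_1,\ldots,t_l][[e^{t_1},\ldots,e^{t_{l+1}}]]$. Then the solutions of $( * )$ are uniquely determined by the constant terms $g_d^0\in\mathcal{R}^\infty_0$ of those $g_d$ with $d_1=m_1d_{l+1},\ldots,d_l=m_ld_{l+1}$. More precisely, solutions satisfy recurrence relations $$g_d=\begin{cases}G_d(g_d^0,\ g_{d'}\mid d'<d)&\text{if } d_i=m_id_{l+1}\text{ for all }1\le i\le l,\\ G_d(g_{d'}\mid d'<d)&\text{otherwise,}\end{cases}$$ where $d'<d$ means $d'\le d$ componentwise and $d'\ne d$, and each $G_d$ is $\mathcal{R}$-linear in coefficients: every coefficient of the polynomial $g_d$ is of the form $C_0g_d^0+\sum_jC_jv_j$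 (first case) or $\sum_jC_jv_j$ (second case), with $C_j\in M^{\infty\times\infty}_0(\mathcal{R})$ and $v_j\in\mathcal{R}^\infty_0$ coefficients of polynomials $g_{d'}$ with $d'<d$.
   Context: $\mathcal{R}^\infty_0$ denotes sequences (indexed by positive integers) in $\mathcal{R}$ with finite support; for a ring $\mathcal{S}$, $M^{\infty\times\infty}_0(\mathcal{S})$ denotes infinite matrices indexed by positive integers each of whose columns has finitely many nonzero entries (acting on finitely supported sequences). $e^{td}=e^{t_1d_1}\cdots e^{t_{l+1}d_{l+1}}$, and the $e^{t_j}$ are treated as formal multiplicative variables. The operator $\partial_i$ ($1\le i\le l$) is $\mathcal{R}$-linear and defined by $\partial_i(ge^{td})=\frac{\partial g}{\partial t_i}e^{td}+(d_i-m_id_{l+1})ge^{td}$ for $g$ polynomial in $t_1,\ldots,t_l$. *)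

theory Defs
  imports Complex_Main
begin

text \<open>Multi-indices are functions nat => nat (pointwise order and subtraction).
  Exponents d of e^{t_1},...,e^{t_{N}} are supported on {1..N}.\<close>

definition mindex :: "nat \<Rightarrow> (nat \<Rightarrow> nat) set" where
  "mindex N = {d. \<forall>i. i \<notin> {1..N} \<longrightarrow> d i = 0}"

text \<open>Polynomials in R[e^{t_1},...,e^{t_{l+1}}]: finitely supported coefficient functions.\<close>
definition epoly :: "nat \<Rightarrow> ((nat \<Rightarrow> nat) \<Rightarrow> 'r::zero) set" where
  "epoly l = {p. finite {d. p d \<noteq> 0} \<and> (\<forall>d. p d \<noteq> 0 \<longrightarrow> d \<in> mindex (Suc l))}"

text \<open>Matrices in M_0(R[e^t]) (row n, column j, coefficient of e^{td}); each column has
  finitely many nonzero entries.  Indices start at 0 instead of 1.\<close>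
definition emat :: "nat \<Rightarrow> (nat \<Rightarrow> nat \<Rightarrow> (nat \<Rightarrow> nat) \<Rightarrow> 'r::zero) \<Rightarrow> bool" where
  "emat l A \<longleftrightarrow> (\<forall>n j. A n j \<in> epoly l) \<and> (\<forall>j. finite {n. A n j \<noteq> (\<lambda>d. 0)})"

definition rmat :: "(nat \<Rightarrow> nat \<Rightarrow> 'r::zero) \<Rightarrow> bool" where
  "rmat C \<longleftrightarrow> (\<forall>j. finite {n. C n j \<noteq> 0})"

definition mulv :: "(nat \<Rightarrow> nat \<Rightarrow> 'r::comm_ring_1) \<Rightarrow> (nat \<Rightarrow> 'r) \<Rightarrow> nat \<Rightarrow> 'r" where
  "mulv C v n = (\<Sum>j\<in>{j. v j \<noteq> 0}. C n j * v j)"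

definition emul :: "(nat \<Rightarrow> nat \<Rightarrow> (nat \<Rightarrow> nat) \<Rightarrow> 'r::comm_ring_1)
    \<Rightarrow> (nat \<Rightarrow> nat \<Rightarrow> (nat \<Rightarrow> nat) \<Rightarrow> 'r) \<Rightarrow> nat \<Rightarrow> nat \<Rightarrow> (nat \<Rightarrow> nat) \<Rightarrow> 'r" where
  "emul A B n p d = (\<Sum>q\<in>{q. B q p \<noteq> (\<lambda>d. 0)}. \<Sum>d'\<in>{d'. d' \<le> d}. A n q d' * B q p (d - d'))"

text \<open>Elements g of R^infty_0[t_1..t_l][[e^{t_1},...,e^{t_{l+1}}]]:
  g d k n = n-th component of the coefficient of t^k e^{td}.\<close>
definition gspace :: "nat \<Rightarrow> ((nat \<Rightarrow> nat) \<Rightarrow> (nat \<Rightarrow> nat) \<Rightarrow> nat \<Rightarrow> 'r::zero) \<Rightarrow> bool" where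
  "gspace l g \<longleftrightarrow> (\<forall>d. d \<notin> mindex (Suc l) \<longrightarrow> g d = (\<lambda>k n. 0)) \<and>
     (\<forall>d. finite {(k, n). g d k n \<noteq> 0} \<and> (\<forall>k n. g d k n \<noteq> 0 \<longrightarrow> k \<in> mindex l))"

definition pder :: "nat \<Rightarrow> (nat \<Rightarrow> nat) \<Rightarrow> nat \<Rightarrow> ((nat \<Rightarrow> nat) \<Rightarrow> (nat \<Rightarrow> nat) \<Rightarrow> nat \<Rightarrow> 'r::comm_ring_1)
    \<Rightarrow> (nat \<Rightarrow> nat) \<Rightarrow> (nat \<Rightarrow> nat) \<Rightarrow> nat \<Rightarrow> 'r" where
  "pder l m i g d k n = of_nat (k i + 1) * g d (k(i := k i + 1)) n
     + of_int (int (d i) - int (m i) * int (d (Suc l))) * g d k n"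

definition epder :: "nat \<Rightarrow> (nat \<Rightarrow> nat) \<Rightarrow> nat \<Rightarrow> ((nat \<Rightarrow> nat) \<Rightarrow> 'r::comm_ring_1) \<Rightarrow> (nat \<Rightarrow> nat) \<Rightarrow> 'r" where
  "epder l m i a d = of_int (int (d i) - int (m i) * int (d (Suc l))) * a d"

definition amul :: "(nat \<Rightarrow> nat \<Rightarrow> (nat \<Rightarrow> nat) \<Rightarrow> 'r::comm_ring_1)
    \<Rightarrow> ((nat \<Rightarrow> nat) \<Rightarrow> (nat \<Rightarrow> nat) \<Rightarrow> nat \<Rightarrow> 'r) \<Rightarrow> (nat \<Rightarrow> nat) \<Rightarrow> (nat \<Rightarrow> nat) \<Rightarrow> nat \<Rightarrow> 'r" where
  "amul A g d k n = (\<Sum>d'\<in>{d'. d' \<le> d}. \<Sum>j\<in>{j. g (d - d') k j \<noteq> 0}. A n j d' * g (d - d') k j)"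

definition resonant :: "nat \<Rightarrow> (nat \<Rightarrow> nat) \<Rightarrow> (nat \<Rightarrow> nat) \<Rightarrow> bool" where
  "resonant l m d \<longleftrightarrow> (\<forall>i\<in>{1..l}. d i = m i * d (Suc l))"

definition is_solution :: "nat \<Rightarrow> (nat \<Rightarrow> nat) \<Rightarrow> (nat \<Rightarrow> nat \<Rightarrow> nat \<Rightarrow> (nat \<Rightarrow> nat) \<Rightarrow> 'r::comm_ring_1)
    \<Rightarrow> ((nat \<Rightarrow> nat) \<Rightarrow> (nat \<Rightarrow> nat) \<Rightarrow> nat \<Rightarrow> 'r) \<Rightarrow> bool" where
  "is_solution l m A g \<longleftrightarrow> gspace l g \<and>
     (\<forall>i\<in>{1..l}. \<forall>d\<in>mindex (Suc l). pder l m i g d = amul (A i) g d)"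

end

theory Submission
  imports Defs
begin

text \<open>Split each A_i into its constant term A_i(0), which is strictly upper triangular, and the
  rest. The coefficient g_d of e^{td} then satisfies, in direction i, the recurrence
  (k_i + 1) g_{d,k+e_i} + (c - A_i(0)) g_{d,k} = (terms from exponents below d), with
  c = d_i - m_i d_{l+1}. If c \<noteq> 0 the operator c - A_i(0) is invertible on finitely supported
  vectors, and g_d is determined by downward recursion in k_i; if d is resonant, all c vanish and
  k_i g_{d,k} = A_i(0) g_{d,k-e_i} + (lower terms) determines g_d from its constant term by recursion
  on the degree of k. Keeping only the equations used in these recursions gives a reduced system
  which, unlike the full one, is solvable for arbitrary prescribed resonant constant terms, so its
  solution depends linearly on them; evaluating it on unit vectors yields the matrices C_j.\<close>

section \<open>Finitely supported vectors and strictly upper triangular matrices\<close>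

definition finsupp :: "(nat \<Rightarrow> 'r::zero) \<Rightarrow> bool" where
  "finsupp v \<longleftrightarrow> finite {n. v n \<noteq> 0}"

definition strict_upper :: "(nat \<Rightarrow> nat \<Rightarrow> 'r::zero) \<Rightarrow> bool" where
  "strict_upper N \<longleftrightarrow> (\<forall>n p. N n p \<noteq> 0 \<longrightarrow> n < p)"

lemma finsupp_zero [simp]: "finsupp (\<lambda>n. 0)"
  by (simp add: finsupp_def)

lemma finsupp_vanishes_from:
  assumes "finsupp v" obtains P where "\<forall>n\<ge>P. v n = 0"
proof -
  obtain P where "\<forall>n\<in>{n. v n \<noteq> 0}. n < P"
    using assms finite_nat_set_iff_bounded unfolding finsupp_def by blast
  then have "\<forall>n\<ge>P. v n = 0" by (metis leD mem_Collect_eq)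
  with that show thesis .
qed

lemma finsupp_sum:
  fixes f :: "'a \<Rightarrow> nat \<Rightarrow> 'r::comm_monoid_add"
  assumes "finite S" "\<forall>x\<in>S. finsupp (f x)"
  shows "finsupp (\<lambda>n. \<Sum>x\<in>S. f x n)"
proof -
  have "{n. (\<Sum>x\<in>S. f x n) \<noteq> 0} \<subseteq> (\<Union>x\<in>S. {n. f x n \<noteq> 0})"
    by (auto intro: ccontr elim: sum.not_neutral_contains_not_neutral)
  then show ?thesis
    using assms unfolding finsupp_def by (auto intro: finite_subset)
qed

lemma finsupp_add: "finsupp v \<Longrightarrow> finsupp w \<Longrightarrow> finsupp (\<lambda>n. v n + w n :: 'r::monoid_add)"
  unfolding finsupp_def
  by (rule finite_subset[of _ "{n. v n \<noteq> 0} \<union> {n. w n \<noteq> 0}"]) auto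

lemma finsupp_scale: "finsupp v \<Longrightarrow> finsupp (\<lambda>n. a * v n :: 'r::mult_zero)"
  unfolding finsupp_def by (rule finite_subset[of _ "{n. v n \<noteq> 0}"]) auto

lemma mulv_eq_sum_superset:
  assumes "finite T" "{j. v j \<noteq> 0} \<subseteq> T"
  shows "mulv C v n = (\<Sum>j\<in>T. C n j * v j)"
  unfolding mulv_def by (rule sum.mono_neutral_left) (use assms in auto)

lemma mulv_zero [simp]: "mulv C (\<lambda>n. 0) = (\<lambda>n. 0)"
  by (simp add: mulv_def fun_eq_iff)

lemma mulv_lincomb:
  assumes "finsupp v" "finsupp w"
  shows "mulv C (\<lambda>n. a * v n + w n) n = a * mulv C v n + mulv C w n"
proof -
  let ?T = "{n. v n \<noteq> 0} \<union> {n. w n \<noteq> 0}"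
  have T: "finite ?T" using assms by (simp add: finsupp_def)
  have "mulv C (\<lambda>n. a * v n + w n) n = (\<Sum>j\<in>?T. C n j * (a * v j + w j))"
    by (rule mulv_eq_sum_superset[OF T]) auto
  also have "\<dots> = a * (\<Sum>j\<in>?T. C n j * v j) + (\<Sum>j\<in>?T. C n j * w j)"
    by (simp add: sum.distrib sum_distrib_left algebra_simps)
  finally show ?thesis
    by (simp add: mulv_eq_sum_superset[OF T, of v] mulv_eq_sum_superset[OF T, of w])
qed

lemma finsupp_mulv:
  assumes "rmat C" "finsupp v"
  shows "finsupp (mulv C v)"
proof -
  have "{n. mulv C v n \<noteq> 0} \<subseteq> (\<Union>j\<in>{j. v j \<noteq> 0}. {n. C n j \<noteq> 0})"
  proof
    fix n assume "n \<in> {n. mulv C v n \<noteq> 0}"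
    then obtain j where "j \<in> {j. v j \<noteq> 0}" "C n j * v j \<noteq> 0"
      unfolding mulv_def by (auto elim: sum.not_neutral_contains_not_neutral)
    then show "n \<in> (\<Union>j\<in>{j. v j \<noteq> 0}. {n. C n j \<noteq> 0})" by auto
  qed
  then show ?thesis
    using assms unfolding finsupp_def rmat_def by (auto intro: finite_subset)
qed

lemma mulv_strict_upper_vanishes:
  assumes "strict_upper N" "\<forall>n\<ge>Suc P. v n = 0" "P \<le> n"
  shows "mulv N v n = 0"
  unfolding mulv_def
proof (rule sum.neutral, rule ballI)
  fix j assume "j \<in> {j. v j \<noteq> 0}"
  then have "j \<le> n" using assms(2,3) by (meson mem_Collect_eq not_less_eq_eq order.trans)
  then have "N n j = 0" using assms(1) unfolding strict_upper_def by (meson leD)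
  then show "N n j * v j = 0" by simp
qed

lemma unit_minus_strict_upper_inj:
  fixes v :: "nat \<Rightarrow> 'r::comm_ring_1"
  assumes "c' * c = 1" "strict_upper N" "finsupp v" "\<forall>n. c * v n = mulv N v n"
  shows "v = (\<lambda>n. 0)"
proof (rule ccontr)
  assume "v \<noteq> (\<lambda>n. 0)"
  then have ne: "{n. v n \<noteq> 0} \<noteq> {}" by auto
  have fin: "finite {n. v n \<noteq> 0}" using assms(3) by (simp add: finsupp_def)
  define p where "p = Max {n. v n \<noteq> 0}"
  have "v p \<noteq> 0" using Max_in[OF fin ne] by (simp add: p_def)
  have "mulv N v p = 0"
    unfolding mulv_def
  proof (rule sum.neutral, rule ballI)
    fix j assume "j \<in> {j. v j \<noteq> 0}"
    then have "j \<le> p" using Max_ge[OF fin] by (simp add: p_def)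
    then have "N p j = 0" using assms(2) unfolding strict_upper_def by (meson leD)
    then show "N p j * v j = 0" by simp
  qed
  then have "c' * (c * v p) = 0" using assms(4) by simp
  with \<open>v p \<noteq> 0\<close> show False by (simp add: mult.assoc[symmetric] assms(1))
qed

lemma unit_minus_strict_upper_surj:
  fixes v :: "nat \<Rightarrow> 'r::comm_ring_1"
  assumes "c' * c = 1" "strict_upper N" "finsupp v"
  shows "\<exists>w. finsupp w \<and> (\<forall>n. c * w n = v n + mulv N w n)"
proof -
  have "\<forall>n\<ge>P. v n = 0 \<Longrightarrow> \<exists>w. finsupp w \<and> (\<forall>n. c * w n = v n + mulv N w n)" for P v
  proof (induction P arbitrary: v)
    case 0
    then have "v = (\<lambda>n. 0)" by auto
    then show ?case by (intro exI[of _ "\<lambda>n. 0"]) simp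
  next
    case (Suc p)
    \<comment> \<open>u accounts for the top entry v p; by strict upper triangularity N u lives below p\<close>
    define u where "u = (\<lambda>n. if n = p then c' * v p else 0)"
    have u: "finsupp u" unfolding finsupp_def u_def by (rule finite_subset[of _ "{p}"]) auto
    have Nu: "mulv N u n = N n p * (c' * v p)" for n
      by (subst mulv_eq_sum_superset[of "{p}"]) (auto simp: u_def)
    define v' where "v' = (\<lambda>n. v n - (if n = p then v p else 0) + mulv N u n)"
    have "\<forall>n\<ge>p. v' n = 0"
    proof (intro allI impI)
      fix n assume "p \<le> n"
      then have "N n p = 0" using assms(2) unfolding strict_upper_def by (meson leD)
      moreover have "n \<noteq> p \<Longrightarrow> v n = 0" using Suc.prems \<open>p \<le> n\<close> by auto
      ultimately show "v' n = 0" unfolding v'_def Nu by auto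
    qed
    then obtain w' where w': "finsupp w'" "\<forall>n. c * w' n = v' n + mulv N w' n"
      using Suc.IH by blast
    have "c * (w' n + u n) = v n + mulv N (\<lambda>n. w' n + u n) n" for n
    proof -
      have "mulv N (\<lambda>n. w' n + u n) n = mulv N w' n + mulv N u n"
        using mulv_lincomb[OF w'(1) u, of N 1 n] by simp
      moreover have "c * u n = (if n = p then v p else 0)"
        using assms(1) unfolding u_def by (simp add: mult.assoc[symmetric] mult.commute[of c c'])
      ultimately show ?thesis using w'(2)[rule_format, of n] by (simp add: v'_def algebra_simps)
    qed
    moreover have "finsupp (\<lambda>n. w' n + u n)" using w'(1) u by (rule finsupp_add)
    ultimately show ?case by (intro exI[of _ "\<lambda>n. w' n + u n"]) simp
  qed
  moreover obtain P where "\<forall>n\<ge>P. v n = 0" using finsupp_vanishes_from[OF assms(3)] .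
  ultimately show ?thesis by blast
qed

section \<open>Multi-indices\<close>

definition mdeg :: "nat \<Rightarrow> (nat \<Rightarrow> nat) \<Rightarrow> nat" where
  "mdeg N d = (\<Sum>i\<in>{1..N}. d i)"

lemma mindex_le:
  assumes "d' \<le> d" "d \<in> mindex N" shows "d' \<in> mindex N"
proof -
  have "d' i = 0" if "i \<notin> {1..N}" for i
    using assms le_funD[OF assms(1), of i] that unfolding mindex_def by simp
  then show ?thesis by (simp add: mindex_def)
qed

lemma mindex_fun_upd [simp]: "i \<in> {1..N} \<Longrightarrow> k(i := j) \<in> mindex N \<longleftrightarrow> k \<in> mindex N"
  unfolding mindex_def by auto

lemma zero_mindex [simp]: "(\<lambda>_. 0) \<in> mindex N"
  by (simp add: mindex_def)

lemma mdeg_zero [simp]: "mdeg N (\<lambda>_. 0) = 0"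
  by (simp add: mdeg_def)

lemma mdeg_mono: "d' \<le> d \<Longrightarrow> mdeg N d' \<le> mdeg N d"
  unfolding mdeg_def by (rule sum_mono) (simp add: le_fun_def)

lemma mdeg_strict_mono:
  assumes "d \<in> mindex N" "d' < d"
  shows "mdeg N d' < mdeg N d"
proof -
  have "\<not> d \<le> d'" using assms(2) by (simp add: less_fun_def)
  then obtain x where x: "d' x < d x" by (auto simp: le_fun_def not_le)
  then have "x \<in> {1..N}" using assms(1) unfolding mindex_def by (cases "x \<in> {1..N}") auto
  with x show ?thesis
    using assms(2) unfolding mdeg_def less_fun_def le_fun_def
    by (intro sum_strict_mono_ex1) auto
qed

lemma finite_mindex_mdeg_le: "finite {k \<in> mindex N. mdeg N k \<le> h}"
proof (rule finite_subset)
  let ?F = "{k. \<forall>x. (x \<in> {1..N} \<longrightarrow> k x \<in> {..h}) \<and> (x \<notin> {1..N} \<longrightarrow> k x = 0)}"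
  show "{k \<in> mindex N. mdeg N k \<le> h} \<subseteq> ?F"
  proof (intro subsetI CollectI allI conjI impI)
    fix k x assume k: "k \<in> {k \<in> mindex N. mdeg N k \<le> h}"
    show "x \<notin> {1..N} \<Longrightarrow> k x = 0" using k by (simp add: mindex_def)
    assume "x \<in> {1..N}"
    then have "k x \<le> mdeg N k" unfolding mdeg_def by (intro member_le_sum) auto
    with k show "k x \<in> {..h}" by simp
  qed
  show "finite ?F" using finite_set_of_finite_funs[of "{1..N}" "{..h}" 0] by simp
qed

lemma finite_le_mindex:
  assumes "d \<in> mindex N" shows "finite {d'. d' \<le> d}"
proof (rule finite_subset)
  show "{d'. d' \<le> d} \<subseteq> {k \<in> mindex N. mdeg N k \<le> mdeg N d}"
    using assms mindex_le mdeg_mono by blast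
qed (rule finite_mindex_mdeg_le)

lemma diff_less_fun:
  fixes d d' :: "nat \<Rightarrow> nat"
  assumes "d' \<le> d" "d' \<noteq> (\<lambda>_. 0)"
  shows "d - d' < d"
proof -
  obtain x where "d' x \<noteq> 0" using assms(2) by auto
  moreover have "d' x \<le> d x" using assms(1) by (simp add: le_fun_def)
  ultimately have "(d - d') x < d x" by simp
  then show ?thesis by (auto simp: less_fun_def le_fun_def not_le intro!: exI[of _ x])
qed

text \<open>For k \<noteq> 0, the coefficient of t^k is computed from that of t^(lower_first k) by the
  equation in the direction first_var k.\<close>

definition first_var :: "(nat \<Rightarrow> nat) \<Rightarrow> nat" where
  "first_var k = (LEAST i. 0 < k i)"

definition lower_first :: "(nat \<Rightarrow> nat) \<Rightarrow> nat \<Rightarrow> nat" where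
  "lower_first k = k(first_var k := k (first_var k) - 1)"

lemma first_var:
  assumes "k \<in> mindex N" "k \<noteq> (\<lambda>_. 0)"
  shows "first_var k \<in> {1..N}" and "0 < k (first_var k)"
proof -
  obtain i where "0 < k i" using assms(2) by (auto simp: fun_eq_iff)
  then have "0 < k (first_var k)" unfolding first_var_def by (rule LeastI)
  then show "0 < k (first_var k)" "first_var k \<in> {1..N}"
    using assms(1) unfolding mindex_def by auto
qed

lemma lower_first:
  assumes "k \<in> mindex N" "k \<noteq> (\<lambda>_. 0)"
  shows "lower_first k \<in> mindex N"
    and "Suc (mdeg N (lower_first k)) = mdeg N k"
    and "lower_first k (first_var k) + 1 = k (first_var k)"
    and "(lower_first k)(first_var k := lower_first k (first_var k) + 1) = k"
proof -
  note i = first_var[OF assms]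
  show "lower_first k \<in> mindex N" "lower_first k (first_var k) + 1 = k (first_var k)"
    "(lower_first k)(first_var k := lower_first k (first_var k) + 1) = k"
    using assms(1) i by (auto simp: lower_first_def fun_eq_iff)
  have "mdeg N k = k (first_var k) + (\<Sum>i\<in>{1..N} - {first_var k}. k i)"
    "mdeg N (lower_first k) = lower_first k (first_var k) + (\<Sum>i\<in>{1..N} - {first_var k}. lower_first k i)"
    unfolding mdeg_def using sum.remove[OF finite_atLeastAtMost i(1)] by auto
  moreover have "(\<Sum>i\<in>{1..N} - {first_var k}. lower_first k i) = (\<Sum>i\<in>{1..N} - {first_var k}. k i)"
    by (rule sum.cong) (auto simp: lower_first_def)
  ultimately show "Suc (mdeg N (lower_first k)) = mdeg N k"
    using i(2) by (simp add: lower_first_def)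
qed

lemma wf_less_mindex: "wf {(d', d). d' < d \<and> d \<in> mindex N}"
  by (rule wf_subset[OF wf_measure[of "mdeg N"]]) (auto intro: mdeg_strict_mono)

section \<open>Recurrences for polynomials with vector coefficients\<close>

lemma of_int_left_inverse:
  assumes "c \<noteq> 0"
  shows "of_real (inverse (real_of_int c)) * (of_int c :: 'r::real_algebra_1) = 1"
proof -
  have "of_real (inverse (real_of_int c)) * (of_int c :: 'r) =
      of_real (inverse (real_of_int c)) * of_real (real_of_int c)"
    by simp
  also have "\<dots> = of_real (inverse (real_of_int c) * real_of_int c)"
    by (simp only: of_real_mult)
  finally show ?thesis using assms by simp
qed

lemma of_nat_left_inverse:
  "j \<noteq> 0 \<Longrightarrow> of_real (inverse (real j)) * (of_nat j :: 'r::real_algebra_1) = 1"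
  using of_int_left_inverse[of "int j"] by simp

text \<open>x k n is the n-th entry of the coefficient of t^k, so vpoly l x means that x lies in
  the module R^\<infinity>_0[t_1, ..., t_l].\<close>

definition vpoly :: "nat \<Rightarrow> ((nat \<Rightarrow> nat) \<Rightarrow> nat \<Rightarrow> 'r::zero) \<Rightarrow> bool" where
  "vpoly l x \<longleftrightarrow> (\<forall>k. finsupp (x k)) \<and> finite {k. x k \<noteq> (\<lambda>n. 0)} \<and>
     (\<forall>k. x k \<noteq> (\<lambda>n. 0) \<longrightarrow> k \<in> mindex l)"

lemma vpoly_zero [simp]: "vpoly l (\<lambda>k n. 0)"
  by (simp add: vpoly_def)

lemma vpoly_lincomb:
  assumes "vpoly l x" "vpoly l y"
  shows "vpoly l (\<lambda>k n. a * x k n + y k n :: 'r::comm_ring_1)"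
proof -
  have "{k. (\<lambda>n. a * x k n + y k n) \<noteq> (\<lambda>n. 0)} \<subseteq> {k. x k \<noteq> (\<lambda>n. 0)} \<union> {k. y k \<noteq> (\<lambda>n. 0)}"
    by auto
  moreover have "finsupp (\<lambda>n. a * x k n + y k n)" for k
    using assms unfolding vpoly_def by (intro finsupp_add finsupp_scale) auto
  ultimately show ?thesis
    using assms unfolding vpoly_def by (auto intro: finite_subset)
qed

lemma finite_nonzero_pairs_iff:
  "finite {(k, n). x k n \<noteq> 0} \<longleftrightarrow> (\<forall>k. finsupp (x k)) \<and> finite {k. x k \<noteq> (\<lambda>n. 0)}"
  (is "finite ?S \<longleftrightarrow> _")
proof
  assume S: "finite ?S"
  have "{n. x k n \<noteq> 0} \<subseteq> snd ` ?S" for k by force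
  moreover have "{k. x k \<noteq> (\<lambda>n. 0)} \<subseteq> fst ` ?S" by force
  ultimately show "(\<forall>k. finsupp (x k)) \<and> finite {k. x k \<noteq> (\<lambda>n. 0)}"
    using S unfolding finsupp_def by (meson finite_imageI finite_subset)
next
  assume "(\<forall>k. finsupp (x k)) \<and> finite {k. x k \<noteq> (\<lambda>n. 0)}"
  then have "finite (Sigma {k. x k \<noteq> (\<lambda>n. 0)} (\<lambda>k. {n. x k n \<noteq> 0}))"
    unfolding finsupp_def by blast
  moreover have "?S \<subseteq> Sigma {k. x k \<noteq> (\<lambda>n. 0)} (\<lambda>k. {n. x k n \<noteq> 0})" by auto
  ultimately show "finite ?S" by (rule finite_subset[rotated])
qed

lemma gspace_iff_vpoly:
  "gspace l g \<longleftrightarrow> (\<forall>d. d \<notin> mindex (Suc l) \<longrightarrow> g d = (\<lambda>k n. 0)) \<and> (\<forall>d. vpoly l (g d))"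
proof -
  have "(\<forall>k n. g d k n \<noteq> 0 \<longrightarrow> k \<in> mindex l) \<longleftrightarrow> (\<forall>k. g d k \<noteq> (\<lambda>n. 0) \<longrightarrow> k \<in> mindex l)" for d
    by (auto simp: fun_eq_iff)
  then show ?thesis
    unfolding gspace_def vpoly_def finite_nonzero_pairs_iff by blast
qed

lemma shift_recurrence_solvable:
  fixes r :: "nat \<Rightarrow> nat \<Rightarrow> 'r::comm_ring_1"
  assumes c: "c' * c = 1" and N: "strict_upper N"
    and r: "\<forall>j. finsupp (r j)" "\<forall>j>J. r j = (\<lambda>n. 0)"
  shows "\<exists>y. (\<forall>j. finsupp (y j)) \<and> (\<forall>j>J. y j = (\<lambda>n. 0)) \<and>
     (\<forall>j n. of_nat (j + 1) * y (Suc j) n + c * y j n = mulv N (y j) n + r j n)"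
proof -
  \<comment> \<open>solve downwards from J, where the recurrence starts with y (Suc J) = 0\<close>
  have "\<exists>y. (\<forall>j. finsupp (y j)) \<and> (\<forall>j>J. y j = (\<lambda>n. 0)) \<and>
     (\<forall>j n. J < j + t \<longrightarrow> of_nat (j + 1) * y (Suc j) n + c * y j n = mulv N (y j) n + r j n)" for t
  proof (induction t)
    case 0
    show ?case by (rule exI[of _ "\<lambda>j n. 0"]) (use r(2) in auto)
  next
    case (Suc t)
    then obtain y where y: "\<forall>j. finsupp (y j)" "\<forall>j>J. y j = (\<lambda>n. 0)"
      "\<forall>j n. J < j + t \<longrightarrow> of_nat (j + 1) * y (Suc j) n + c * y j n = mulv N (y j) n + r j n"
      by blast
    show ?case
    proof (cases "J < t")
      case True
      then show ?thesis using y by (intro exI[of _ y]) auto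
    next
      case False
      define j0 where "j0 = J - t"
      have "finsupp (\<lambda>n. r j0 n + (- of_nat (j0 + 1)) * y (Suc j0) n)"
        using r(1) y(1) by (intro finsupp_add finsupp_scale) auto
      then obtain w where w: "finsupp w"
        "\<forall>n. c * w n = r j0 n + (- of_nat (j0 + 1)) * y (Suc j0) n + mulv N w n"
        using unit_minus_strict_upper_surj[OF c N] by blast
      have "of_nat (j + 1) * (y(j0 := w)) (Suc j) n + c * (y(j0 := w)) j n
          = mulv N ((y(j0 := w)) j) n + r j n" if "J < j + Suc t" for j n
      proof (cases "j = j0")
        case True
        then show ?thesis using w(2) by (simp add: algebra_simps)
      next
        case False
        then have "J < j + t" "Suc j \<noteq> j0" using that \<open>\<not> J < t\<close> by (auto simp: j0_def)
        then show ?thesis using y(3) False by simp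
      qed
      moreover have "\<forall>j>J. (y(j0 := w)) j = (\<lambda>n. 0)" using y(2) by (auto simp: j0_def)
      ultimately show ?thesis using y(1) w(1) by (intro exI[of _ "y(j0 := w)"]) auto
    qed
  qed
  from this[of "Suc J"] show ?thesis by auto
qed

lemma line_recurrence_solvable:
  fixes r :: "nat \<Rightarrow> nat \<Rightarrow> 'r::comm_ring_1"
  assumes c: "c' * c = 1" and N: "strict_upper N"
    and r: "\<forall>j. finsupp (r j)" "finite {j. r j \<noteq> (\<lambda>n. 0)}"
  shows "\<exists>y. (\<forall>j. finsupp (y j)) \<and> finite {j. y j \<noteq> (\<lambda>n. 0)} \<and>
     (\<forall>j n. of_nat (j + 1) * y (Suc j) n + c * y j n = mulv N (y j) n + r j n) \<and>
     ((\<forall>j. r j = (\<lambda>n. 0)) \<longrightarrow> y = (\<lambda>j n. 0))"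
proof (cases "\<forall>j. r j = (\<lambda>n. 0)")
  case True
  then show ?thesis by (intro exI[of _ "\<lambda>j n. 0"]) simp
next
  case False
  obtain J where "\<forall>j>J. r j = (\<lambda>n. 0)"
    using r(2) by (metis (mono_tags, lifting) finite_nat_set_iff_bounded_le mem_Collect_eq not_le)
  then obtain y where y: "\<forall>j. finsupp (y j)" "\<forall>j>J. y j = (\<lambda>n. 0)"
    "\<forall>j n. of_nat (j + 1) * y (Suc j) n + c * y j n = mulv N (y j) n + r j n"
    using shift_recurrence_solvable[OF c N r(1)] by blast
  have "finite {j. y j \<noteq> (\<lambda>n. 0)}"
    by (rule finite_subset[of _ "{..J}"]) (use y(2) in \<open>auto simp: not_le[symmetric]\<close>)
  with y False show ?thesis by blast
qed

lemma coordinate_recurrence_solvable: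
  fixes r :: "(nat \<Rightarrow> nat) \<Rightarrow> nat \<Rightarrow> 'r::comm_ring_1"
  assumes c: "c' * c = 1" and N: "strict_upper N" and i: "i \<in> {1..l}" and r: "vpoly l r"
  shows "\<exists>x. vpoly l x \<and>
     (\<forall>k n. of_nat (k i + 1) * x (k(i := k i + 1)) n + c * x k n = mulv N (x k) n + r k n)"
proof -
  \<comment> \<open>solve along each line in direction i; choosing the zero solution on lines where r vanishes
    keeps the support finite\<close>
  have "finite {j. r (b(i := j)) \<noteq> (\<lambda>n. 0)}" for b
  proof -
    have "{j. r (b(i := j)) \<noteq> (\<lambda>n. 0)} \<subseteq> (\<lambda>k. k i) ` {k. r k \<noteq> (\<lambda>n. 0)}"
      by (auto intro!: image_eqI[where x = "b(i := _)"])
    then show ?thesis using r unfolding vpoly_def by (meson finite_imageI finite_subset)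
  qed
  then have "\<exists>y. (\<forall>j. finsupp (y j)) \<and> finite {j. y j \<noteq> (\<lambda>n. 0)} \<and>
     (\<forall>j n. of_nat (j + 1) * y (Suc j) n + c * y j n = mulv N (y j) n + r (b(i := j)) n) \<and>
     ((\<forall>j. r (b(i := j)) = (\<lambda>n. 0)) \<longrightarrow> y = (\<lambda>j n. 0))" for b
    using line_recurrence_solvable[OF c N, of "\<lambda>j. r (b(i := j))"] r unfolding vpoly_def by blast
  then obtain Y where Y: "\<And>b. (\<forall>j. finsupp (Y b j)) \<and> finite {j. Y b j \<noteq> (\<lambda>n. 0)} \<and>
     (\<forall>j n. of_nat (j + 1) * Y b (Suc j) n + c * Y b j n = mulv N (Y b j) n + r (b(i := j)) n) \<and>
     ((\<forall>j. r (b(i := j)) = (\<lambda>n. 0)) \<longrightarrow> Y b = (\<lambda>j n. 0))"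
    by metis
  define x where "x k = Y (k(i := 0)) (k i)" for k
  have eq: "of_nat (k i + 1) * x (k(i := k i + 1)) n + c * x k n = mulv N (x k) n + r k n" for k n
    using Y[of "k(i := 0)"] unfolding x_def by simp
  have supp: "\<exists>j. r ((k(i := 0))(i := j)) \<noteq> (\<lambda>n. 0)" if "x k \<noteq> (\<lambda>n. 0)" for k
    using Y[of "k(i := 0)"] that unfolding x_def by auto
  have "k \<in> mindex l" if "x k \<noteq> (\<lambda>n. 0)" for k
    using supp[OF that] r i unfolding vpoly_def by auto
  moreover have "finite {k. x k \<noteq> (\<lambda>n. 0)}"
  proof -
    let ?B = "(\<lambda>k. k(i := 0)) ` {k. r k \<noteq> (\<lambda>n. 0)}"
    have "{k. x k \<noteq> (\<lambda>n. 0)} \<subseteq> (\<lambda>(b, j). b(i := j)) ` Sigma ?B (\<lambda>b. {j. Y b j \<noteq> (\<lambda>n. 0)})"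
    proof
      fix k assume k: "k \<in> {k. x k \<noteq> (\<lambda>n. 0)}"
      then obtain j where "r ((k(i := 0))(i := j)) \<noteq> (\<lambda>n. 0)" using supp by blast
      then have "k(i := 0) \<in> ?B" by (auto intro!: image_eqI[where x = "(k(i := 0))(i := j)"])
      with k have "(k(i := 0), k i) \<in> Sigma ?B (\<lambda>b. {j. Y b j \<noteq> (\<lambda>n. 0)})"
        by (simp add: x_def)
      then show "k \<in> (\<lambda>(b, j). b(i := j)) ` Sigma ?B (\<lambda>b. {j. Y b j \<noteq> (\<lambda>n. 0)})"
        by (rule rev_image_eqI) simp
    qed
    moreover have "finite (Sigma ?B (\<lambda>b. {j. Y b j \<noteq> (\<lambda>n. 0)}))"
      using r Y unfolding vpoly_def by blast
    ultimately show ?thesis by (meson finite_imageI finite_subset)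
  qed
  moreover have "\<forall>k. finsupp (x k)" using Y unfolding x_def by blast
  ultimately show ?thesis using eq unfolding vpoly_def by blast
qed

lemma coordinate_recurrence_unique:
  fixes x :: "(nat \<Rightarrow> nat) \<Rightarrow> nat \<Rightarrow> 'r::comm_ring_1"
  assumes c: "c' * c = 1" and N: "strict_upper N"
    and x: "\<forall>k. finsupp (x k)" "finite {k. x k \<noteq> (\<lambda>n. 0)}"
    and eq: "\<forall>k n. of_nat (k i + 1) * x (k(i := k i + 1)) n + c * x k n = mulv N (x k) n"
  shows "x k = (\<lambda>n. 0)"
proof (rule ccontr)
  assume "x k \<noteq> (\<lambda>n. 0)"
  let ?S = "{k. x k \<noteq> (\<lambda>n. 0)}"
  have fin: "finite ((\<lambda>k. k i) ` ?S)" using x(2) by simp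
  obtain k0 where k0: "k0 \<in> ?S" "k0 i = Max ((\<lambda>k. k i) ` ?S)"
    using Max_in[OF fin] \<open>x k \<noteq> (\<lambda>n. 0)\<close> by fastforce
  have "k0(i := k0 i + 1) \<notin> ?S"
  proof
    assume "k0(i := k0 i + 1) \<in> ?S"
    then have "k0 i + 1 \<le> Max ((\<lambda>k. k i) ` ?S)"
      using Max_ge[OF fin] by (metis (mono_tags) fun_upd_same image_eqI)
    with k0(2) show False by simp
  qed
  then have "\<forall>n. c * x k0 n = mulv N (x k0) n" using eq by (metis (mono_tags) mem_Collect_eq add_0 mult_zero_right)
  then have "x k0 = (\<lambda>n. 0)" using unit_minus_strict_upper_inj[OF c N] x(1) by blast
  with k0(1) show False by simp
qed

lemma degree_recursion_finite_support:
  fixes x :: "(nat \<Rightarrow> nat) \<Rightarrow> nat \<Rightarrow> 'r::comm_ring_1"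
  assumes N: "\<forall>i\<in>{1..l}. strict_upper (N i)"
    and x: "\<forall>k. finsupp (x k)" "\<forall>k. k \<notin> mindex l \<longrightarrow> x k = (\<lambda>n. 0)"
    and step: "\<forall>k\<in>mindex l. B < mdeg l k \<longrightarrow>
      (\<exists>a. \<forall>n. x k n = a * mulv (N (first_var k)) (x (lower_first k)) n)"
  shows "finite {k. x k \<noteq> (\<lambda>n. 0)}"
proof -
  let ?K = "{k \<in> mindex l. mdeg l k \<le> B}"
  have "finite (\<Union>k\<in>?K. {n. x k n \<noteq> 0})"
    using finite_mindex_mdeg_le x(1) by (auto simp: finsupp_def)
  then obtain Q where Q: "\<forall>k\<in>?K. \<forall>n\<ge>Q. x k n = 0"
    by (metis (mono_tags, lifting) UN_I finite_nat_set_iff_bounded mem_Collect_eq not_le)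
  \<comment> \<open>each degree above B shifts the support bound down by one\<close>
  have shrink: "\<forall>k\<in>mindex l. mdeg l k = B + t \<longrightarrow> (\<forall>n\<ge>Q - t. x k n = 0)" for t
  proof (induction t)
    case 0
    then show ?case using Q by simp
  next
    case (Suc t)
    show ?case
    proof (intro ballI impI allI)
      fix k n assume k: "k \<in> mindex l" "mdeg l k = B + Suc t" and n: "Q - Suc t \<le> n"
      then have k0: "k \<noteq> (\<lambda>_. 0)" by auto
      note low = lower_first[OF k(1) k0]
      have "\<forall>n\<ge>Suc (Q - Suc t). x (lower_first k) n = 0"
        using Suc.IH low(1,2) k(2) by auto
      then have "mulv (N (first_var k)) (x (lower_first k)) n = 0"
        using N first_var(1)[OF k(1) k0] n by (blast intro: mulv_strict_upper_vanishes)
      moreover have "B < mdeg l k" using k(2) by simp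
      then obtain a where "\<forall>n. x k n = a * mulv (N (first_var k)) (x (lower_first k)) n"
        using step k(1) by blast
      ultimately show "x k n = 0" by simp
    qed
  qed
  have vanish: "x k = (\<lambda>n. 0)" if "B + Q \<le> mdeg l k" for k
  proof (cases "k \<in> mindex l")
    case True
    then show ?thesis using shrink[of "mdeg l k - B"] that by (auto simp: fun_eq_iff)
  qed (use x(2) in blast)
  have "{k. x k \<noteq> (\<lambda>n. 0)} \<subseteq> {k \<in> mindex l. mdeg l k \<le> B + Q}"
    using x(2) vanish nat_le_linear by blast
  then show ?thesis using finite_mindex_mdeg_le by (rule finite_subset)
qed

lemma degree_recursion_exists:
  fixes N :: "nat \<Rightarrow> nat \<Rightarrow> nat \<Rightarrow> 'r::{real_algebra_1, comm_ring_1}"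
    and r :: "nat \<Rightarrow> (nat \<Rightarrow> nat) \<Rightarrow> nat \<Rightarrow> 'r"
  assumes N: "\<forall>i\<in>{1..l}. rmat (N i)" and r: "\<forall>i\<in>{1..l}. \<forall>k. finsupp (r i k)" and v: "finsupp v"
  shows "\<exists>x. \<forall>k. finsupp (x k) \<and> x k = (if k \<notin> mindex l then (\<lambda>n. 0) else if k = (\<lambda>_. 0) then v
    else (\<lambda>n. of_real (inverse (real (k (first_var k)))) *
      (mulv (N (first_var k)) (x (lower_first k)) n + r (first_var k) (lower_first k) n)))"
proof -
  define step where "step y k = (\<lambda>n. of_real (inverse (real (k (first_var k)))) *
    (mulv (N (first_var k)) (y (lower_first k)) n + r (first_var k) (lower_first k) n))"
    for y :: "(nat \<Rightarrow> nat) \<Rightarrow> nat \<Rightarrow> 'r" and k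
  define F where "F y k = (if k \<notin> mindex l then (\<lambda>n. 0) else if k = (\<lambda>_. 0) then v else step y k)"
    for y k
  define x where "x = wfrec (measure (mdeg l)) F"
  have x_eq: "x k = F x k" for k
  proof -
    have "x k = F (cut x (measure (mdeg l)) k) k"
      unfolding x_def by (rule wfrec[OF wf_measure])
    moreover have "step (cut x (measure (mdeg l)) k) k = step x k" if "k \<in> mindex l" "k \<noteq> (\<lambda>_. 0)"
      using lower_first(2)[OF that] unfolding step_def by (simp add: cut_apply)
    ultimately show ?thesis unfolding F_def by auto
  qed
  have "finsupp (x k)" for k
  proof (induction k rule: measure_induct_rule[of "mdeg l"])
    case (less k)
    show ?case
    proof (cases "k \<in> mindex l \<and> k \<noteq> (\<lambda>_. 0)")
      case True
      then have "mdeg l (lower_first k) < mdeg l k" using lower_first(2)[of k l] by simp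
      then have "finsupp (x (lower_first k))" by (rule less)
      moreover have "first_var k \<in> {1..l}" using first_var(1) True by blast
      ultimately show ?thesis
        using N r True x_eq[of k] unfolding F_def step_def
        by (auto intro!: finsupp_scale finsupp_add finsupp_mulv)
    next
      case False
      then show ?thesis using v x_eq[of k] unfolding F_def by auto
    qed
  qed
  with x_eq show ?thesis unfolding F_def step_def by blast
qed

lemma degree_recurrence_solvable:
  fixes N :: "nat \<Rightarrow> nat \<Rightarrow> nat \<Rightarrow> 'r::{real_algebra_1, comm_ring_1}"
    and r :: "nat \<Rightarrow> (nat \<Rightarrow> nat) \<Rightarrow> nat \<Rightarrow> 'r"
  assumes N: "\<forall>i\<in>{1..l}. rmat (N i) \<and> strict_upper (N i)"
    and r: "\<forall>i\<in>{1..l}. vpoly l (r i)" and v: "finsupp v"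
  shows "\<exists>x. vpoly l x \<and> x (\<lambda>_. 0) = v \<and>
     (\<forall>k\<in>mindex l. k \<noteq> (\<lambda>_. 0) \<longrightarrow> (\<forall>n. of_nat (k (first_var k)) * x k n =
        mulv (N (first_var k)) (x (lower_first k)) n + r (first_var k) (lower_first k) n))"
proof -
  obtain x where fin: "\<And>k. finsupp (x k)" and x_eq: "\<And>k. x k = (if k \<notin> mindex l then (\<lambda>n. 0)
      else if k = (\<lambda>_. 0) then v else (\<lambda>n. of_real (inverse (real (k (first_var k)))) *
        (mulv (N (first_var k)) (x (lower_first k)) n + r (first_var k) (lower_first k) n)))"
    using degree_recursion_exists[of l N r v] N r v unfolding vpoly_def by blast
  have "finite (mdeg l ` (\<Union>i\<in>{1..l}. {k. r i k \<noteq> (\<lambda>n. 0)}))"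
    using r unfolding vpoly_def by auto
  then obtain B where B: "\<forall>i\<in>{1..l}. \<forall>k. B < mdeg l k \<longrightarrow> r i k = (\<lambda>n. 0)"
    by (metis (mono_tags, lifting) UN_I finite_nat_set_iff_bounded_le image_eqI mem_Collect_eq not_le)
  have "finite {k. x k \<noteq> (\<lambda>n. 0)}"
  proof (rule degree_recursion_finite_support[where B = "Suc B"])
    show "\<forall>k\<in>mindex l. Suc B < mdeg l k \<longrightarrow>
        (\<exists>a. \<forall>n. x k n = a * mulv (N (first_var k)) (x (lower_first k)) n)"
    proof (intro ballI impI)
      fix k assume k: "k \<in> mindex l" "Suc B < mdeg l k"
      then have k0: "k \<noteq> (\<lambda>_. 0)" by auto
      then have "r (first_var k) (lower_first k) = (\<lambda>n. 0)"
        using B first_var(1)[OF k(1)] lower_first(2)[OF k(1)] k(2) by auto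
      then show "\<exists>a. \<forall>n. x k n = a * mulv (N (first_var k)) (x (lower_first k)) n"
        using x_eq[of k] k k0 by auto
    qed
  qed (use N fin x_eq in auto)
  moreover have "of_nat (k (first_var k)) * x k n =
      mulv (N (first_var k)) (x (lower_first k)) n + r (first_var k) (lower_first k) n"
    if "k \<in> mindex l" "k \<noteq> (\<lambda>_. 0)" for k n
    using x_eq[of k] that of_nat_left_inverse[of "k (first_var k)", where 'r = 'r] first_var(2)[OF that]
    by (simp add: mult.assoc[symmetric] mult.commute[of "of_nat _"])
  moreover have "k \<in> mindex l" if "x k \<noteq> (\<lambda>n. 0)" for k
    using that x_eq[of k] by (auto split: if_splits)
  moreover have "x (\<lambda>_. 0) = v" using x_eq[of "\<lambda>_. 0"] by simp
  ultimately show ?thesis using fin unfolding vpoly_def by (intro exI[of _ x]) blast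
qed

lemma degree_recurrence_unique:
  fixes x :: "(nat \<Rightarrow> nat) \<Rightarrow> nat \<Rightarrow> 'r::{real_algebra_1, comm_ring_1}"
  assumes "\<forall>k. k \<notin> mindex l \<longrightarrow> x k = (\<lambda>n. 0)" "x (\<lambda>_. 0) = (\<lambda>n. 0)"
    and "\<forall>k\<in>mindex l. k \<noteq> (\<lambda>_. 0) \<longrightarrow>
      (\<forall>n. of_nat (k (first_var k)) * x k n = mulv (N (first_var k)) (x (lower_first k)) n)"
  shows "x k = (\<lambda>n. 0)"
proof (induction k rule: measure_induct_rule[of "mdeg l"])
  case (less k)
  show ?case
  proof (cases "k \<in> mindex l \<and> k \<noteq> (\<lambda>_. 0)")
    case True
    then have "mdeg l (lower_first k) < mdeg l k" using lower_first(2)[of k l] by simp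
    then have "x (lower_first k) = (\<lambda>n. 0)" by (rule less)
    then have "of_nat (k (first_var k)) * x k n = 0" for n using assms(3) True by simp
    then have "of_real (inverse (real (k (first_var k)))) * (of_nat (k (first_var k)) * x k n) = 0" for n
      by simp
    moreover have "of_real (inverse (real (k (first_var k)))) * of_nat (k (first_var k)) = (1::'r)"
      using first_var(2)[of k l] True by (intro of_nat_left_inverse) simp
    ultimately show ?thesis by (simp add: fun_eq_iff mult.assoc[symmetric])
  next
    case False
    then show ?thesis using assms(1,2) by blast
  qed
qed

section \<open>The reduced system\<close>

locale triangular_system =
  fixes l :: nat and m :: "nat \<Rightarrow> nat"
    and A :: "nat \<Rightarrow> nat \<Rightarrow> nat \<Rightarrow> (nat \<Rightarrow> nat) \<Rightarrow> 'r::{real_algebra_1, comm_ring_1}"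
  assumes A_rmat: "i \<in> {1..l} \<Longrightarrow> rmat (\<lambda>n p. A i n p d)"
    and A0_strict_upper: "i \<in> {1..l} \<Longrightarrow> strict_upper (\<lambda>n p. A i n p (\<lambda>_. 0))"
begin

abbreviation A0 :: "nat \<Rightarrow> nat \<Rightarrow> nat \<Rightarrow> 'r" where
  "A0 i \<equiv> (\<lambda>n p. A i n p (\<lambda>_. 0))"

definition lower_terms :: "nat \<Rightarrow> ((nat \<Rightarrow> nat) \<Rightarrow> (nat \<Rightarrow> nat) \<Rightarrow> nat \<Rightarrow> 'r) \<Rightarrow>
    (nat \<Rightarrow> nat) \<Rightarrow> (nat \<Rightarrow> nat) \<Rightarrow> nat \<Rightarrow> 'r" where
  "lower_terms i g d k n = (\<Sum>d'\<in>{d'. d' \<le> d} - {\<lambda>_. 0}. mulv (\<lambda>n p. A i n p d') (g (d - d') k) n)"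

definition nonres_var :: "(nat \<Rightarrow> nat) \<Rightarrow> nat" where
  "nonres_var d = (LEAST i. i \<in> {1..l} \<and> d i \<noteq> m i * d (Suc l))"

text \<open>Of the equations at the exponent d we keep just enough to compute g_d from lower
  exponents: at a resonant d the constant term is prescribed to be D d and every other coefficient
  is reached through its first variable; otherwise one non-resonant direction is used. Unlike the
  full system, this reduced system is solvable for every D.\<close>

definition reduced_eqs :: "((nat \<Rightarrow> nat) \<Rightarrow> nat \<Rightarrow> 'r) \<Rightarrow>
    ((nat \<Rightarrow> nat) \<Rightarrow> (nat \<Rightarrow> nat) \<Rightarrow> nat \<Rightarrow> 'r) \<Rightarrow> (nat \<Rightarrow> nat) \<Rightarrow> bool" where
  "reduced_eqs D g d \<longleftrightarrow> (if resonant l m d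
     then g d (\<lambda>_. 0) = D d \<and> (\<forall>k\<in>mindex l. k \<noteq> (\<lambda>_. 0) \<longrightarrow>
       pder l m (first_var k) g d (lower_first k) = amul (A (first_var k)) g d (lower_first k))
     else (\<forall>k. pder l m (nonres_var d) g d k = amul (A (nonres_var d)) g d k))"

definition reduced_solution :: "((nat \<Rightarrow> nat) \<Rightarrow> nat \<Rightarrow> 'r) \<Rightarrow>
    ((nat \<Rightarrow> nat) \<Rightarrow> (nat \<Rightarrow> nat) \<Rightarrow> nat \<Rightarrow> 'r) \<Rightarrow> bool" where
  "reduced_solution D g \<longleftrightarrow> gspace l g \<and> (\<forall>d\<in>mindex (Suc l). reduced_eqs D g d)"

lemma nonres_var:
  assumes "\<not> resonant l m d"
  shows "nonres_var d \<in> {1..l}" and "d (nonres_var d) \<noteq> m (nonres_var d) * d (Suc l)"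
proof -
  obtain i where "i \<in> {1..l} \<and> d i \<noteq> m i * d (Suc l)"
    using assms unfolding resonant_def by blast
  then have "nonres_var d \<in> {1..l} \<and> d (nonres_var d) \<noteq> m (nonres_var d) * d (Suc l)"
    unfolding nonres_var_def by (rule LeastI)
  then show "nonres_var d \<in> {1..l}" "d (nonres_var d) \<noteq> m (nonres_var d) * d (Suc l)"
    by auto
qed

lemma amul_split:
  assumes "d \<in> mindex (Suc l)"
  shows "amul (A i) g d k n = mulv (A0 i) (g d k) n + lower_terms i g d k n"
proof -
  have "amul (A i) g d k n = (\<Sum>d'\<in>{d'. d' \<le> d}. mulv (\<lambda>n p. A i n p d') (g (d - d') k) n)"
    unfolding amul_def mulv_def by simp
  also have "\<dots> = mulv (A0 i) (g d k) n + lower_terms i g d k n"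
    unfolding lower_terms_def
    by (subst sum.remove[OF finite_le_mindex[OF assms], of "\<lambda>_. 0"]) (auto simp: le_fun_def fun_diff_def)
  finally show ?thesis .
qed

lemma lower_terms_cong:
  assumes "\<forall>d'. d' < d \<longrightarrow> g d' = h d'"
  shows "lower_terms i g d = lower_terms i h d"
  unfolding lower_terms_def using assms diff_less_fun by (intro ext sum.cong) auto

lemma lower_terms_upd [simp]: "lower_terms i (g(d := x)) d = lower_terms i g d"
  by (rule lower_terms_cong) simp

lemma vpoly_lower_terms:
  assumes i: "i \<in> {1..l}" and d: "d \<in> mindex (Suc l)" and g: "\<forall>d'. d' < d \<longrightarrow> vpoly l (g d')"
  shows "vpoly l (lower_terms i g d)"
proof -
  let ?S = "{d'. d' \<le> d} - {\<lambda>_. 0}"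
  have S: "finite ?S" using finite_le_mindex[OF d] by simp
  have gS: "vpoly l (g (d - d'))" if "d' \<in> ?S" for d'
    using g diff_less_fun that by auto
  have "finsupp (lower_terms i g d k)" for k
    unfolding lower_terms_def
    using gS A_rmat[OF i] by (intro finsupp_sum[OF S] ballI finsupp_mulv) (auto simp: vpoly_def)
  moreover have "{k. lower_terms i g d k \<noteq> (\<lambda>n. 0)} \<subseteq> (\<Union>d'\<in>?S. {k. g (d - d') k \<noteq> (\<lambda>n. 0)})"
  proof
    fix k assume "k \<in> {k. lower_terms i g d k \<noteq> (\<lambda>n. 0)}"
    then obtain n where "lower_terms i g d k n \<noteq> 0" by auto
    then obtain d' where "d' \<in> ?S" "mulv (\<lambda>n p. A i n p d') (g (d - d') k) n \<noteq> 0"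
      unfolding lower_terms_def by (rule sum.not_neutral_contains_not_neutral)
    then show "k \<in> (\<Union>d'\<in>?S. {k. g (d - d') k \<noteq> (\<lambda>n. 0)})" by force
  qed
  moreover have "finite (\<Union>d'\<in>?S. {k. g (d - d') k \<noteq> (\<lambda>n. 0)})"
    using S gS unfolding vpoly_def by blast
  ultimately show ?thesis
    using gS unfolding vpoly_def by (blast intro: finite_subset)
qed

lemma reduced_eqs_cong:
  assumes "\<forall>d'. d' \<le> d \<longrightarrow> g d' = h d'"
  shows "reduced_eqs D g d = reduced_eqs D h d"
proof -
  have "g (d - d') = h (d - d')" for d'
    using assms by (simp add: le_fun_def)
  then have "amul B g d = amul B h d" for B
    unfolding amul_def by simp
  moreover have "pder l m i g d = pder l m i h d" for i
    using assms unfolding pder_def by simp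
  ultimately show ?thesis
    using assms unfolding reduced_eqs_def by simp
qed

lemma reduced_eqs_resonant_iff:
  assumes d: "d \<in> mindex (Suc l)" and res: "resonant l m d"
  shows "reduced_eqs D g d \<longleftrightarrow> g d (\<lambda>_. 0) = D d \<and>
    (\<forall>k\<in>mindex l. k \<noteq> (\<lambda>_. 0) \<longrightarrow> (\<forall>n. of_nat (k (first_var k)) * g d k n =
      mulv (A0 (first_var k)) (g d (lower_first k)) n + lower_terms (first_var k) g d (lower_first k) n))"
proof -
  have "pder l m (first_var k) g d (lower_first k) n = of_nat (k (first_var k)) * g d k n"
    if "k \<in> mindex l" "k \<noteq> (\<lambda>_. 0)" for k n
    using res first_var(1)[OF that] lower_first(3,4)[OF that]
    unfolding pder_def resonant_def by simp
  then show ?thesis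
    using res unfolding reduced_eqs_def amul_split[OF d] fun_eq_iff by auto
qed

lemma reduced_eqs_nonresonant_iff:
  assumes d: "d \<in> mindex (Suc l)" and res: "\<not> resonant l m d"
  defines "i \<equiv> nonres_var d"
  shows "reduced_eqs D g d \<longleftrightarrow> (\<forall>k n. of_nat (k i + 1) * g d (k(i := k i + 1)) n
    + of_int (int (d i) - int (m i) * int (d (Suc l))) * g d k n
    = mulv (A0 i) (g d k) n + lower_terms i g d k n)"
  using res unfolding reduced_eqs_def amul_split[OF d] fun_eq_iff pder_def i_def by simp

lemma level_solvable:
  assumes d: "d \<in> mindex (Suc l)" and g: "\<forall>d'. d' < d \<longrightarrow> vpoly l (g d')" and D: "finsupp (D d)"
  shows "\<exists>x. vpoly l x \<and> reduced_eqs D (g(d := x)) d"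
proof (cases "resonant l m d")
  case True
  have "\<forall>i\<in>{1..l}. rmat (A0 i) \<and> strict_upper (A0 i)" using A_rmat A0_strict_upper by blast
  moreover have "\<forall>i\<in>{1..l}. vpoly l (lower_terms i g d)" using vpoly_lower_terms d g by blast
  ultimately obtain x where "vpoly l x" "x (\<lambda>_. 0) = D d"
    "\<forall>k\<in>mindex l. k \<noteq> (\<lambda>_. 0) \<longrightarrow> (\<forall>n. of_nat (k (first_var k)) * x k n =
       mulv (A0 (first_var k)) (x (lower_first k)) n + lower_terms (first_var k) g d (lower_first k) n)"
    using degree_recurrence_solvable[where N = A0 and r = "\<lambda>i. lower_terms i g d", OF _ _ D] by blast
  then show ?thesis using reduced_eqs_resonant_iff[OF d True] by auto
next
  case False
  define i where "i = nonres_var d"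
  define c where "c = int (d i) - int (m i) * int (d (Suc l))"
  have i: "i \<in> {1..l}" and "c \<noteq> 0"
    using nonres_var[OF False] by (auto simp: i_def c_def simp flip: of_nat_mult)
  obtain x where "vpoly l x" "\<forall>k n. of_nat (k i + 1) * x (k(i := k i + 1)) n + of_int c * x k n
      = mulv (A0 i) (x k) n + lower_terms i g d k n"
    using coordinate_recurrence_solvable[OF of_int_left_inverse[OF \<open>c \<noteq> 0\<close>] A0_strict_upper[OF i] i
      vpoly_lower_terms[OF i d g]] by blast
  then show ?thesis using reduced_eqs_nonresonant_iff[OF d False] by (auto simp: i_def c_def)
qed

lemma level_vanishes:
  assumes d: "d \<in> mindex (Suc l)" and eqs: "reduced_eqs D g d" and g: "vpoly l (g d)"
    and below: "\<forall>d'. d' < d \<longrightarrow> g d' = (\<lambda>k n. 0)" and D: "resonant l m d \<Longrightarrow> D d = (\<lambda>n. 0)"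
  shows "g d = (\<lambda>k n. 0)"
proof -
  have low: "lower_terms i g d = (\<lambda>k n. 0)" for i
  proof -
    have "lower_terms i g d = lower_terms i (\<lambda>d k n. 0) d"
      by (rule lower_terms_cong) (use below in auto)
    also have "\<dots> = (\<lambda>k n. 0)" by (intro ext) (simp add: lower_terms_def)
    finally show ?thesis .
  qed
  have "g d k = (\<lambda>n. 0)" for k
  proof (cases "resonant l m d")
    case True
    have "\<forall>k. k \<notin> mindex l \<longrightarrow> g d k = (\<lambda>n. 0)" using g unfolding vpoly_def by blast
    moreover have "g d (\<lambda>_. 0) = (\<lambda>n. 0)"
      and "\<forall>k\<in>mindex l. k \<noteq> (\<lambda>_. 0) \<longrightarrow> (\<forall>n. of_nat (k (first_var k)) * g d k n =
        mulv (A0 (first_var k)) (g d (lower_first k)) n)"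
      using eqs D[OF True] unfolding reduced_eqs_resonant_iff[OF d True] low by simp_all
    ultimately show ?thesis by (rule degree_recurrence_unique)
  next
    case False
    define i where "i = nonres_var d"
    define c where "c = int (d i) - int (m i) * int (d (Suc l))"
    have i: "i \<in> {1..l}" and "c \<noteq> 0"
      using nonres_var[OF False] by (auto simp: i_def c_def simp flip: of_nat_mult)
    have "\<forall>k n. of_nat (k i + 1) * g d (k(i := k i + 1)) n + of_int c * g d k n = mulv (A0 i) (g d k) n"
      using eqs unfolding reduced_eqs_nonresonant_iff[OF d False] low by (simp add: i_def c_def)
    then show ?thesis
      using coordinate_recurrence_unique[OF of_int_left_inverse[OF \<open>c \<noteq> 0\<close>] A0_strict_upper[OF i]] g
      unfolding vpoly_def by blast
  qed
  then show ?thesis by auto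
qed

lemma pder_lincomb:
  "pder l m i (\<lambda>d k n. a * g d k n + h d k n) d k n = a * pder l m i g d k n + pder l m i h d k n"
  unfolding pder_def by (simp add: algebra_simps)

lemma amul_lincomb:
  assumes "\<forall>d k. finsupp (g d k)" "\<forall>d k. finsupp (h d k)"
  shows "amul B (\<lambda>d k n. a * g d k n + h d k n) d k n = a * amul B g d k n + amul B h d k n"
proof -
  have amul_mulv: "amul B f d k n = (\<Sum>d'\<in>{d'. d' \<le> d}. mulv (\<lambda>n j. B n j d') (f (d - d') k) n)" for f
    unfolding amul_def mulv_def by simp
  show ?thesis
    unfolding amul_mulv using assms by (simp add: mulv_lincomb sum.distrib sum_distrib_left)
qed

lemma reduced_solution_lincomb:
  assumes g: "reduced_solution D g" and h: "reduced_solution D' h"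
  shows "reduced_solution (\<lambda>e n. a * D e n + D' e n) (\<lambda>d k n. a * g d k n + h d k n)"
proof -
  have gs: "gspace l g" "gspace l h" using g h unfolding reduced_solution_def by auto
  then have fin: "\<forall>d k. finsupp (g d k)" "\<forall>d k. finsupp (h d k)"
    unfolding gspace_iff_vpoly vpoly_def by auto
  have "gspace l (\<lambda>d k n. a * g d k n + h d k n)"
    using gs unfolding gspace_iff_vpoly by (auto intro: vpoly_lincomb)
  moreover have "reduced_eqs (\<lambda>e n. a * D e n + D' e n) (\<lambda>d k n. a * g d k n + h d k n) d"
    if "d \<in> mindex (Suc l)" for d
    using g h that unfolding reduced_solution_def reduced_eqs_def
    by (auto simp: fun_eq_iff pder_lincomb amul_lincomb[OF fin] split: if_splits)
  ultimately show ?thesis unfolding reduced_solution_def by blast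
qed

lemma reduced_solution_vanishes:
  assumes g: "reduced_solution D g" and d0: "d0 \<in> mindex (Suc l)"
    and D: "\<forall>e\<le>d0. resonant l m e \<longrightarrow> D e = (\<lambda>n. 0)"
  shows "g d0 = (\<lambda>k n. 0)"
proof -
  have "d \<le> d0 \<Longrightarrow> g d = (\<lambda>k n. 0)" for d
  proof (induction d rule: measure_induct_rule[of "mdeg (Suc l)"])
    case (less d)
    have d: "d \<in> mindex (Suc l)" using mindex_le[OF less.prems d0] .
    have "g d' = (\<lambda>k n. 0)" if "d' < d" for d'
      using less.IH[of d'] mdeg_strict_mono[OF d that] that less.prems by auto
    then show ?case
      using level_vanishes[OF d] g D less.prems d unfolding reduced_solution_def gspace_iff_vpoly by auto
  qed
  then show ?thesis by simp
qed

lemma reduced_solution_unique_at: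
  assumes g: "reduced_solution D g" and h: "reduced_solution D' h" and d0: "d0 \<in> mindex (Suc l)"
    and DD': "\<forall>e\<le>d0. resonant l m e \<longrightarrow> D e = D' e"
  shows "g d0 = h d0"
proof -
  have "(\<lambda>d k n. (-1) * g d k n + h d k n) d0 = (\<lambda>k n. 0)"
    by (rule reduced_solution_vanishes[OF reduced_solution_lincomb[OF g h] d0]) (use DD' in auto)
  then show ?thesis by (auto simp: fun_eq_iff)
qed

lemma reduced_solution_unique:
  assumes "reduced_solution D g" "reduced_solution D h"
  shows "g = h"
proof
  fix d show "g d = h d"
  proof (cases "d \<in> mindex (Suc l)")
    case True
    then show ?thesis using reduced_solution_unique_at[OF assms] by blast
  next
    case False
    then show ?thesis using assms unfolding reduced_solution_def gspace_iff_vpoly by simp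
  qed
qed

text \<open>The choice below is meaningful (by level_solvable) only if every D e is finitely supported.\<close>

definition reduced_sol :: "((nat \<Rightarrow> nat) \<Rightarrow> nat \<Rightarrow> 'r) \<Rightarrow> (nat \<Rightarrow> nat) \<Rightarrow> (nat \<Rightarrow> nat) \<Rightarrow> nat \<Rightarrow> 'r" where
  "reduced_sol D = wfrec {(d', d). d' < d \<and> d \<in> mindex (Suc l)} (\<lambda>G d.
     if d \<in> mindex (Suc l) then (SOME x. vpoly l x \<and> reduced_eqs D (G(d := x)) d) else (\<lambda>k n. 0))"

lemma reduced_solution_reduced_sol:
  assumes D: "\<forall>e. finsupp (D e)"
  shows "reduced_solution D (reduced_sol D)"
proof -
  let ?R = "{(d', d). d' < d \<and> d \<in> mindex (Suc l)}"
  let ?G = "reduced_sol D"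
  have G: "?G d = (if d \<in> mindex (Suc l)
      then (SOME x. vpoly l x \<and> reduced_eqs D ((cut ?G ?R d)(d := x)) d) else (\<lambda>k n. 0))" for d
    unfolding reduced_sol_def by (subst wfrec[OF wf_less_mindex]) simp
  have "vpoly l (?G d) \<and> (d \<in> mindex (Suc l) \<longrightarrow> reduced_eqs D ?G d)" for d
  proof (induction d rule: measure_induct_rule[of "mdeg (Suc l)"])
    case (less d)
    show ?case
    proof (cases "d \<in> mindex (Suc l)")
      case True
      have "\<forall>d'. d' < d \<longrightarrow> vpoly l (cut ?G ?R d d')"
        using less.IH mdeg_strict_mono[OF True] True by (simp add: cut_apply)
      then have "\<exists>x. vpoly l x \<and> reduced_eqs D ((cut ?G ?R d)(d := x)) d"
        using level_solvable[OF True] D by blast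
      then have "vpoly l (?G d) \<and> reduced_eqs D ((cut ?G ?R d)(d := ?G d)) d"
        unfolding G[of d] if_P[OF True] by (rule someI_ex)
      moreover have "\<forall>d'. d' \<le> d \<longrightarrow> ((cut ?G ?R d)(d := ?G d)) d' = ?G d'"
        using True by (auto simp: cut_apply order.strict_iff_order)
      ultimately show ?thesis using reduced_eqs_cong by blast
    next
      case False
      then show ?thesis using G[of d] by simp
    qed
  qed
  moreover have "\<forall>d. d \<notin> mindex (Suc l) \<longrightarrow> ?G d = (\<lambda>k n. 0)" using G by simp
  ultimately show ?thesis unfolding reduced_solution_def gspace_iff_vpoly by blast
qed

lemma reduced_sol_eqI: "reduced_solution D g \<Longrightarrow> \<forall>e. finsupp (D e) \<Longrightarrow> reduced_sol D = g"
  using reduced_solution_unique reduced_solution_reduced_sol by blast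

lemma reduced_sol_lincomb:
  assumes "\<forall>e. finsupp (D e)" "\<forall>e. finsupp (D' e)"
  shows "reduced_sol (\<lambda>e n. a * D e n + D' e n) = (\<lambda>d k n. a * reduced_sol D d k n + reduced_sol D' d k n)"
proof (rule reduced_sol_eqI)
  show "reduced_solution (\<lambda>e n. a * D e n + D' e n) (\<lambda>d k n. a * reduced_sol D d k n + reduced_sol D' d k n)"
    using assms by (intro reduced_solution_lincomb reduced_solution_reduced_sol)
  show "\<forall>e. finsupp (\<lambda>n. a * D e n + D' e n)"
    using assms by (intro allI finsupp_add finsupp_scale) auto
qed

lemma reduced_sol_zero: "reduced_sol (\<lambda>e n. 0) = (\<lambda>d k n. 0)"
proof (rule reduced_sol_eqI)
  show "reduced_solution (\<lambda>e n. 0) (\<lambda>d k n. 0::'r)"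
    unfolding reduced_solution_def reduced_eqs_def gspace_iff_vpoly
    by (simp add: pder_def amul_def fun_eq_iff)
qed simp

lemma reduced_sol_sum:
  assumes "finite X" "\<forall>x\<in>X. \<forall>e. finsupp (Dx x e)"
  shows "reduced_sol (\<lambda>e n. \<Sum>x\<in>X. a x * Dx x e n) = (\<lambda>d k n. \<Sum>x\<in>X. a x * reduced_sol (Dx x) d k n)"
  using assms
proof (induction X rule: finite_induct)
  case empty
  then show ?case using reduced_sol_zero by simp
next
  case (insert x X)
  have "\<forall>e. finsupp (\<lambda>n. \<Sum>x\<in>X. a x * Dx x e n)"
    using insert by (auto intro!: finsupp_sum finsupp_scale)
  then show ?case
    using insert reduced_sol_lincomb[of "Dx x" "\<lambda>e n. \<Sum>x\<in>X. a x * Dx x e n" "a x"] by simp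
qed

section \<open>Solutions of the full system\<close>

lemma reduced_solution_of_solution:
  assumes "is_solution l m A g"
  shows "reduced_solution (\<lambda>e. g e (\<lambda>_. 0)) g"
proof -
  have "\<forall>i\<in>{1..l}. \<forall>d\<in>mindex (Suc l). pder l m i g d = amul (A i) g d"
    using assms unfolding is_solution_def by blast
  then have "reduced_eqs (\<lambda>e. g e (\<lambda>_. 0)) g d" if "d \<in> mindex (Suc l)" for d
    using that first_var(1) nonres_var(1) unfolding reduced_eqs_def by auto
  then show ?thesis using assms unfolding is_solution_def reduced_solution_def by blast
qed

definition unit_data :: "(nat \<Rightarrow> nat) \<Rightarrow> nat \<Rightarrow> (nat \<Rightarrow> nat) \<Rightarrow> nat \<Rightarrow> 'r" where
  "unit_data e p = (\<lambda>e' n. if e' = e \<and> n = p then 1 else 0)"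

lemma finsupp_unit_data: "finsupp (unit_data e p e')"
  unfolding finsupp_def unit_data_def by (rule finite_subset[of _ "{p}"]) auto

lemma solution_expansion:
  assumes d: "d \<in> mindex (Suc l)" and g: "is_solution l m A g"
  shows "g d k n = (\<Sum>e\<in>{e. e \<le> d \<and> resonant l m e}.
     mulv (\<lambda>n p. reduced_sol (unit_data e p) d k n) (g e (\<lambda>_. 0)) n)"
proof -
  let ?E = "{e. e \<le> d \<and> resonant l m e}"
  let ?X = "Sigma ?E (\<lambda>e. {p. g e (\<lambda>_. 0) p \<noteq> 0})"
  have E: "finite ?E" using finite_le_mindex[OF d] by (rule finite_subset[rotated]) auto
  have fin: "\<forall>e. finsupp (g e (\<lambda>_. 0))"
    using g unfolding is_solution_def gspace_iff_vpoly vpoly_def by blast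
  then have X: "finite ?X" using E unfolding finsupp_def by blast
  define D where "D e n = (\<Sum>x\<in>?X. g (fst x) (\<lambda>_. 0) (snd x) * unit_data (fst x) (snd x) e n)" for e n
  have D_eq: "D e n = (if (e, n) \<in> ?X then g e (\<lambda>_. 0) n else 0)" for e n
  proof -
    have "D e n = (\<Sum>x\<in>?X. if x = (e, n) then g (fst x) (\<lambda>_. 0) (snd x) else 0)"
      unfolding D_def unit_data_def by (intro sum.cong) auto
    also have "\<dots> = (if (e, n) \<in> ?X then g (fst (e, n)) (\<lambda>_. 0) (snd (e, n)) else 0)"
      by (rule sum.delta[OF X])
    finally show ?thesis by simp
  qed
  have "\<forall>e. finsupp (D e)"
    using fin unfolding finsupp_def D_eq by (auto intro: finite_subset[rotated])
  then have "reduced_solution D (reduced_sol D)" by (rule reduced_solution_reduced_sol)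
  moreover have "\<forall>e\<le>d. resonant l m e \<longrightarrow> g e (\<lambda>_. 0) = D e" by (auto simp: D_eq)
  ultimately have "g d = reduced_sol D d"
    using reduced_solution_unique_at[OF reduced_solution_of_solution[OF g] _ d] by blast
  also have "reduced_sol D = (\<lambda>d k n. \<Sum>x\<in>?X. g (fst x) (\<lambda>_. 0) (snd x) * reduced_sol (unit_data (fst x) (snd x)) d k n)"
    unfolding D_def using X by (intro reduced_sol_sum) (auto simp: finsupp_unit_data)
  finally have "g d k n = (\<Sum>(e, p)\<in>?X. g e (\<lambda>_. 0) p * reduced_sol (unit_data e p) d k n)"
    by (simp add: case_prod_beta)
  also have "\<dots> = (\<Sum>e\<in>?E. \<Sum>p\<in>{p. g e (\<lambda>_. 0) p \<noteq> 0}. g e (\<lambda>_. 0) p * reduced_sol (unit_data e p) d k n)"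
    using E fin by (subst sum.Sigma) (auto simp: finsupp_def)
  finally show ?thesis unfolding mulv_def by (simp add: mult.commute)
qed

lemma solution_eqI:
  assumes "is_solution l m A g" "is_solution l m A h"
    and "\<forall>d\<in>mindex (Suc l). resonant l m d \<longrightarrow> g d (\<lambda>_. 0) = h d (\<lambda>_. 0)"
  shows "g = h"
proof
  fix d show "g d = h d"
  proof (cases "d \<in> mindex (Suc l)")
    case True
    then show ?thesis
      using reduced_solution_unique_at[OF reduced_solution_of_solution[OF assms(1)] reduced_solution_of_solution[OF assms(2)]] assms(3)
      by (meson mindex_le)
  next
    case False
    then show ?thesis using assms unfolding is_solution_def gspace_iff_vpoly by simp
  qed
qed

lemma solution_coefficient_formula:
  assumes d: "d \<in> mindex (Suc l)"
  shows "\<exists>S C C0. finite S \<and> (\<forall>s\<in>S. fst s < d) \<and> rmat C0 \<and> (\<forall>s\<in>S. rmat (C s)) \<and>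
    (\<forall>g. is_solution l m A g \<longrightarrow>
      (\<forall>n. g d k n = (if resonant l m d then mulv C0 (g d (\<lambda>i. 0)) n else 0)
        + (\<Sum>s\<in>S. mulv (C s) (g (fst s) (snd s)) n)))"
proof -
  let ?E = "{e. e \<le> d \<and> resonant l m e}"
  define C where "C e n p = reduced_sol (unit_data e p) d k n" for e n p
  define S where "S = (\<lambda>e. (e, \<lambda>_::nat. 0::nat)) ` (?E - {d})"
  have E: "finite ?E" using finite_le_mindex[OF d] by (rule finite_subset[rotated]) auto
  have C_rmat: "rmat (C e)" for e
    using reduced_solution_reduced_sol[of "unit_data e _"] finsupp_unit_data
    unfolding rmat_def C_def reduced_solution_def gspace_iff_vpoly vpoly_def finsupp_def by blast
  have eq: "g d k n = (if resonant l m d then mulv (C d) (g d (\<lambda>i. 0)) n else 0)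
      + (\<Sum>s\<in>S. mulv (C (fst s)) (g (fst s) (snd s)) n)"
    if g: "is_solution l m A g" for g n
  proof -
    have "(\<Sum>s\<in>S. mulv (C (fst s)) (g (fst s) (snd s)) n) = (\<Sum>e\<in>?E - {d}. mulv (C e) (g e (\<lambda>_. 0)) n)"
      unfolding S_def by (subst sum.reindex) (auto intro: inj_onI)
    moreover have "g d k n = (\<Sum>e\<in>?E. mulv (C e) (g e (\<lambda>_. 0)) n)"
      using solution_expansion[OF d g] unfolding C_def by simp
    ultimately show ?thesis
      using sum.remove[OF E, of d "\<lambda>e. mulv (C e) (g e (\<lambda>_. 0)) n"] by (cases "resonant l m d") auto
  qed
  moreover have "finite S" "\<forall>s\<in>S. fst s < d" using E by (auto simp: S_def order.strict_iff_order)
  ultimately show ?thesis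
    using C_rmat by (intro exI[of _ S] exI[of _ "\<lambda>s. C (fst s)"] exI[of _ "C d"]) simp
qed

end

lemma rmat_coeff_of_emat:
  assumes "emat l B" shows "rmat (\<lambda>n p. B n p d)"
  unfolding rmat_def
proof
  fix p
  show "finite {n. B n p d \<noteq> 0}"
    by (rule finite_subset[of _ "{n. B n p \<noteq> (\<lambda>d. 0)}"]) (use assms in \<open>auto simp: emat_def\<close>)
qed

lemma strict_upper_const_of_split:
  fixes A' A'' :: "nat \<Rightarrow> nat \<Rightarrow> (nat \<Rightarrow> nat) \<Rightarrow> 'r::comm_monoid_add" and c :: nat
  assumes "A = (\<lambda>n p d. A' n p d + A'' n p d)"
    and "\<forall>n p d. A' n p d \<noteq> 0 \<longrightarrow> d i \<noteq> c * d j" and "\<forall>n p. p \<le> n \<longrightarrow> A'' n p = (\<lambda>d. 0)"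
  shows "strict_upper (\<lambda>n p. A n p (\<lambda>_. 0))"
  unfolding strict_upper_def
proof (intro allI impI)
  fix n p assume nz: "A n p (\<lambda>_. 0) \<noteq> 0"
  \<comment> \<open>the exponent 0 is resonant, so the lower triangular part has no constant term\<close>
  have "A' n p (\<lambda>_. 0) = 0" using assms(2)[rule_format, of n p "\<lambda>_. 0"] by auto
  with nz have nz'': "A'' n p (\<lambda>_. 0) \<noteq> 0" by (simp add: assms(1))
  show "n < p"
  proof (rule ccontr)
    assume "\<not> n < p"
    then have "A'' n p = (\<lambda>d. 0)" using assms(3) by simp
    with nz'' show False by simp
  qed
qed

theorem proposition6p1:
  fixes l :: nat and m :: "nat \<Rightarrow> nat"
    and A :: "nat \<Rightarrow> nat \<Rightarrow> nat \<Rightarrow> (nat \<Rightarrow> nat) \<Rightarrow> 'r::{real_algebra_1, comm_ring_1}"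
  assumes l: "l \<ge> 1"
    and m_pos: "\<forall>i\<in>{1..l}. m i > 0"
    and A_mat: "\<forall>i\<in>{1..l}. emat l (A i)"
    and comm: "\<forall>i\<in>{1..l}. \<forall>j\<in>{1..l}. emul (A i) (A j) = emul (A j) (A i)"
    and compat: "\<forall>i\<in>{1..l}. \<forall>j\<in>{1..l}.
        (\<lambda>n p. epder l m i (A j n p)) = (\<lambda>n p. epder l m j (A i n p))"
    and split: "\<forall>i\<in>{1..l}. \<exists>A' A''. emat l A' \<and> emat l A'' \<and>
        A i = (\<lambda>n p d. A' n p d + A'' n p d) \<and>
        (\<forall>n p. n \<le> p \<longrightarrow> A' n p = (\<lambda>d. 0)) \<and>
        (\<forall>n p d. A' n p d \<noteq> 0 \<longrightarrow> d i \<noteq> m i * d (Suc l)) \<and>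
        (\<forall>n p. p \<le> n \<longrightarrow> A'' n p = (\<lambda>d. 0)) \<and>
        (\<forall>n p d. A'' n p d \<noteq> 0 \<longrightarrow> d = (\<lambda>i. 0))"
  shows "(\<forall>g h. is_solution l m A g \<and> is_solution l m A h \<and>
            (\<forall>d\<in>mindex (Suc l). resonant l m d \<longrightarrow> g d (\<lambda>i. 0) = h d (\<lambda>i. 0)) \<longrightarrow> g = h)
       \<and> (\<forall>d\<in>mindex (Suc l). \<forall>k\<in>mindex l.
            \<exists>S C C0. finite S \<and> (\<forall>s\<in>S. fst s < d) \<and> rmat C0 \<and> (\<forall>s\<in>S. rmat (C s)) \<and>
              (\<forall>g. is_solution l m A g \<longrightarrow>
                 (\<forall>n. g d k n = (if resonant l m d then mulv C0 (g d (\<lambda>i. 0)) n else 0)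
                        + (\<Sum>s\<in>S. mulv (C s) (g (fst s) (snd s)) n))))"
proof -
  interpret triangular_system l m A
  proof
    fix i d assume i: "i \<in> {1..l}"
    show "rmat (\<lambda>n p. A i n p d)" using A_mat i rmat_coeff_of_emat[of l "A i" d] by simp
    obtain A' A'' where "A i = (\<lambda>n p d. A' n p d + A'' n p d)"
      and "\<forall>n p d. A' n p d \<noteq> 0 \<longrightarrow> d i \<noteq> m i * d (Suc l)"
      and "\<forall>n p. p \<le> n \<longrightarrow> A'' n p = (\<lambda>d. 0)"
      using bspec[OF split i] by (elim exE conjE) (rule that; assumption)
    then show "strict_upper (\<lambda>n p. A i n p (\<lambda>_. 0))" by (rule strict_upper_const_of_split)
  qed
  show ?thesis
  proof (intro conjI allI impI ballI)
    show "g = h" if "is_solution l m A g \<and> is_solution l m A h \<and>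
        (\<forall>d\<in>mindex (Suc l). resonant l m d \<longrightarrow> g d (\<lambda>i. 0) = h d (\<lambda>i. 0))" for g h
      using solution_eqI that by blast
  qed (rule solution_coefficient_formula)
qed

end
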